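(* Fix $n\ge1$ and a polynomial $h(x)=h_0+h_1x+\dots+h_{n+1}x^{n+1}$ with $h(1)\ne0$. Define $(a_k)_{k\ge0}$ by $\sum_{k\ge0}a_kx^k=h(x)/(1-x)^{n+1}$, and for each integer $b\ge1$ let $h^{\langle b\rangle}(x)$ be the polynomial of degree at most $n+1$ such that $\sum_{k\ge0}a_{bk}x^k=h^{\langle b\rangle}(x)/(1-x)^{n+1}$. Then, coefficientwise as $b\to\infty$, $$\frac{h^{\langle b\rangle}(x)}{b^n\,h(1)}\longrightarrow\frac{p_n(x)}{n!},$$ where $p_n(x)=\sum_{j\ge0}A(n,j)x^{j+1}$ is the $n$th Eulerian polynomial.
   Context: $A(n,j)$ is the number of permutations $\sigma\in S_n$ with exactly $j$ descents (a descent at $i$, $1\le i\le n-1$, means $\sigma(i+1)<\sigma(i)$). *)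

theory Defs
  imports Complex_Main "HOL-Computational_Algebra.Computational_Algebra"
    "HOL-Combinatorics.Permutations"
begin

definition eulerian_num :: "nat \<Rightarrow> nat \<Rightarrow> nat" where
  "eulerian_num n j = card {\<sigma>. \<sigma> permutes {1..n} \<and>
      card {i \<in> {1..<n}. \<sigma> (Suc i) < \<sigma> i} = j}"

definition eulerian_poly :: "nat \<Rightarrow> real poly" where
  "eulerian_poly n = (\<Sum>j\<le>n. monom (real (eulerian_num n j)) (Suc j))"

definition hilb_series :: "nat \<Rightarrow> real poly \<Rightarrow> real fps" where
  "hilb_series n h = fps_of_poly h / (1 - fps_X) ^ (Suc n)"

text \<open>h^<b>: the numerator with sum_k a_(bk) x^k = h^<b>(x)/(1-x)^(n+1),
  given as the (formal) series (sum_k a_(bk) x^k) * (1-x)^(n+1).\<close>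
definition veronese_num :: "nat \<Rightarrow> real poly \<Rightarrow> nat \<Rightarrow> real fps" where
  "veronese_num n h b =
     Abs_fps (\<lambda>k. fps_nth (hilb_series n h) (b * k)) * (1 - fps_X) ^ (Suc n)"

end

theory Submission
  imports Defs "HOL-Combinatorics.Multiset_Permutations"
begin

(* Write c_i for the coefficients of (1 - x)^(n+1).  By definition the j-th coefficient of
   h^<b> is the convolution  sum_{m<=j} a_(bm) c_(j-m).  Since a_k is a fixed linear
   combination of the binomials C(k - i + n, n) (i <= deg h), one has a_(bm) / b^n -> h(1) m^n / n!,
   so the j-th coefficient of h^<b> / b^n tends to h(1)/n! times sum_{m<=j} m^n c_(j-m), the j-th
   coefficient of (sum_k k^n x^k) (1 - x)^(n+1).  The theorem therefore reduces to the classical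
   identity  sum_k k^n x^k = p_n(x) / (1 - x)^(n+1). *)

section \<open>Descents of lists\<close>

fun descents :: "'a::linorder list \<Rightarrow> nat" where
  "descents [] = 0"
| "descents [x] = 0"
| "descents (x # y # xs) = (if y < x then 1 else 0) + descents (y # xs)"

text \<open>\<open>insert_at p m ys\<close> places \<open>m\<close> in front of the \<open>p\<close>-th entry of \<open>ys\<close>
  (at the end if \<open>p \<ge> length ys\<close>); the recursion is convenient for induction.\<close>

fun insert_at :: "nat \<Rightarrow> 'a \<Rightarrow> 'a list \<Rightarrow> 'a list" where
  "insert_at 0 m ys = m # ys"
| "insert_at (Suc p) m [] = [m]"
| "insert_at (Suc p) m (y # ys) = y # insert_at p m ys"

lemma insert_at_eq: "p \<le> length ys \<Longrightarrow> insert_at p m ys = take p ys @ m # drop p ys"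
  by (induction p m ys rule: insert_at.induct) auto

text \<open>Inserting a new maximum creates one descent, unless it is put at the end or
  into an existing descent, which it then replaces.\<close>

lemma descents_insert_at:
  assumes "\<forall>y\<in>set ys. y < m"
  shows "descents (insert_at p m ys) =
    descents ys + (if p < length ys \<and> (p = 0 \<or> \<not> ys ! p < ys ! (p - 1)) then 1 else 0)"
  using assms
proof (induction p m ys rule: insert_at.induct)
  case (1 m ys)
  then show ?case by (cases ys) auto
next
  case (3 p m y ys)
  then show ?case by (cases p; cases ys) (auto split: nat.splits)
qed simp

definition descent_positions :: "'a::linorder list \<Rightarrow> nat set" where
  "descent_positions xs = {i. Suc i < length xs \<and> xs ! Suc i < xs ! i}"

lemma descent_positions_subset: "descent_positions xs \<subseteq> {..<length xs - 1}"
  by (auto simp: descent_positions_def)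

lemma finite_descent_positions [simp]: "finite (descent_positions xs)"
  using descent_positions_subset finite_subset by blast

lemma descents_eq_card: "descents xs = card (descent_positions xs)"
proof (induction xs rule: descents.induct)
  case (3 x y xs)
  have "descent_positions (x # y # xs) =
      (if y < x then {0} else {}) \<union> Suc ` descent_positions (y # xs)"
  proof (intro set_eqI iffI)
    fix i assume "i \<in> descent_positions (x # y # xs)"
    then show "i \<in> (if y < x then {0} else {}) \<union> Suc ` descent_positions (y # xs)"
      by (cases i) (auto simp: descent_positions_def)
  qed (auto simp: descent_positions_def split: if_splits)
  then show ?case using 3 by (simp add: card_image)
qed (auto simp: descent_positions_def)

lemma descents_le: "descents xs \<le> length xs - 1"
  using card_mono[OF _ descent_positions_subset] by (simp add: descents_eq_card)

lemma card_insertions_with_descents: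
  assumes "\<forall>y\<in>set ys. y < m"
  shows "card {p \<in> {..length ys}. descents (insert_at p m ys) = J} =
     (if descents ys = J then J + 1 else 0) +
     (if Suc (descents ys) = J then length ys - descents ys else 0)"
proof -
  define up where "up p \<longleftrightarrow> p < length ys \<and> (p = 0 \<or> \<not> ys ! p < ys ! (p - 1))" for p
  have count: "descents (insert_at p m ys) = descents ys + (if up p then 1 else 0)" for p
    using descents_insert_at[OF assms] by (simp add: up_def)
  define Keep where "Keep = {p \<in> {..length ys}. \<not> up p}"
  define Raise where "Raise = {p \<in> {..length ys}. up p}"
  text \<open>Inserting at the end or inside an old descent keeps the number of descents.\<close>
  have "Keep = insert (length ys) (Suc ` descent_positions ys)"
    by (auto simp: Keep_def up_def descent_positions_def image_iff gr0_conv_Suc)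
  moreover have "length ys \<notin> Suc ` descent_positions ys"
    by (auto simp: descent_positions_def)
  ultimately have card_Keep: "card Keep = Suc (descents ys)"
    by (simp add: card_image descents_eq_card)
  have "Keep \<union> Raise = {..length ys}" "Keep \<inter> Raise = {}"
    by (auto simp: Keep_def Raise_def)
  then have "card Keep + card Raise = Suc (length ys)"
    using card_Un_disjoint[of Keep Raise] by (simp add: Keep_def Raise_def)
  then have card_Raise: "card Raise = length ys - descents ys"
    using card_Keep by simp
  have "{p \<in> {..length ys}. descents (insert_at p m ys) = J} =
      (if descents ys = J then Keep else if Suc (descents ys) = J then Raise else {})"
    by (auto simp: count Keep_def Raise_def)
  then show ?thesis using card_Keep card_Raise by auto
qed

section \<open>Eulerian numbers via arrangements\<close>

lemma permutations_of_insert_bij: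
  assumes "finite A" "m \<notin> A"
  shows "bij_betw (\<lambda>(ys, p). insert_at p m ys)
           (permutations_of_set A \<times> {..card A}) (permutations_of_set (insert m A))"
proof (rule bij_betw_imageI)
  show "inj_on (\<lambda>(ys, p). insert_at p m ys) (permutations_of_set A \<times> {..card A})"
  proof (rule inj_onI, clarsimp)
    fix ys p zs q
    assume ys: "ys \<in> permutations_of_set A" "p \<le> card A"
      and zs: "zs \<in> permutations_of_set A" "q \<le> card A"
      and eq: "insert_at p m ys = insert_at q m zs"
    have len: "length ys = card A" "length zs = card A"
      using ys zs length_finite_permutations_of_set by blast+
    have "m \<notin> set ys" using ys assms by (auto dest: permutations_of_setD)
    then have m_not_in: "m \<notin> set (take p ys)" "m \<notin> set (drop p ys)"
      by (auto dest: in_set_takeD in_set_dropD)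
    have "take p ys @ m # drop p ys = take q zs @ m # drop q zs"
      using eq ys zs len by (simp add: insert_at_eq)
    then have "take p ys = take q zs" "drop p ys = drop q zs"
      using append_Cons_eq_iff[OF m_not_in] by auto
    moreover have "p = length (take p ys)" "q = length (take q zs)"
      using ys(2) zs(2) len by simp_all
    ultimately show "ys = zs \<and> p = q"
      by (metis append_take_drop_id)
  qed
next
  show "(\<lambda>(ys, p). insert_at p m ys) ` (permutations_of_set A \<times> {..card A}) =
        permutations_of_set (insert m A)"
  proof (intro set_eqI iffI)
    fix xs assume "xs \<in> (\<lambda>(ys, p). insert_at p m ys) ` (permutations_of_set A \<times> {..card A})"
    then obtain ys p where ys: "ys \<in> permutations_of_set A" "p \<le> card A"
      and xs: "xs = insert_at p m ys" by auto
    have "xs = take p ys @ m # drop p ys"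
      using xs ys length_finite_permutations_of_set insert_at_eq by metis
    moreover have "m \<notin> set ys" "distinct ys" "set ys = A"
      using ys assms by (auto dest: permutations_of_setD)
    moreover have "m \<notin> set (take p ys)" "m \<notin> set (drop p ys)"
      using \<open>m \<notin> set ys\<close> by (auto dest: in_set_takeD in_set_dropD)
    moreover have "distinct (take p ys @ drop p ys)" "set (take p ys @ drop p ys) = A"
      using \<open>distinct ys\<close> \<open>set ys = A\<close> by simp_all
    ultimately show "xs \<in> permutations_of_set (insert m A)"
      unfolding permutations_of_set_def by (auto simp del: append_take_drop_id)
  next
    fix xs assume xs: "xs \<in> permutations_of_set (insert m A)"
    then obtain as bs where split: "xs = as @ m # bs"
      by (metis insertI1 permutations_of_setD(1) split_list)
    have "as @ bs \<in> permutations_of_set A"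
      using xs assms unfolding split by (auto simp: permutations_of_set_def)
    moreover have "length as \<le> card A"
      using calculation length_finite_permutations_of_set by fastforce
    moreover have "insert_at (length as) m (as @ bs) = xs"
      using split by (simp add: insert_at_eq)
    ultimately show "xs \<in> (\<lambda>(ys, p). insert_at p m ys) ` (permutations_of_set A \<times> {..card A})"
      by (auto intro!: image_eqI[where x = "(as @ bs, length as)"])
  qed
qed

text \<open>Permutations of the entries of a distinct list correspond to its rearrangements:
  the map is injective, and both sets have \<open>(card A)!\<close> elements.\<close>

lemma permutes_list_bij:
  assumes "distinct xs"
  shows "bij_betw (\<lambda>\<sigma>. map \<sigma> xs) {\<sigma>. \<sigma> permutes set xs} (permutations_of_set (set xs))"
proof (rule bij_betw_imageI)
  show inj: "inj_on (\<lambda>\<sigma>. map \<sigma> xs) {\<sigma>. \<sigma> permutes set xs}"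
  proof (rule inj_onI, rule ext)
    fix \<sigma> \<tau> x
    assume "\<sigma> \<in> {\<sigma>. \<sigma> permutes set xs}" "\<tau> \<in> {\<sigma>. \<sigma> permutes set xs}" "map \<sigma> xs = map \<tau> xs"
    then show "\<sigma> x = \<tau> x"
      by (cases "x \<in> set xs") (auto simp: permutes_not_in)
  qed
  have sub: "(\<lambda>\<sigma>. map \<sigma> xs) ` {\<sigma>. \<sigma> permutes set xs} \<subseteq> permutations_of_set (set xs)"
    using assms by (auto simp: permutations_of_set_def distinct_map permutes_inj_on permutes_image)
  have "card ((\<lambda>\<sigma>. map \<sigma> xs) ` {\<sigma>. \<sigma> permutes set xs}) = card (permutations_of_set (set xs))"
    using inj by (simp add: card_image card_permutations)
  then show "(\<lambda>\<sigma>. map \<sigma> xs) ` {\<sigma>. \<sigma> permutes set xs} = permutations_of_set (set xs)"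
    using sub by (simp add: card_subset_eq)
qed

lemma descents_map_upt:
  "card {i \<in> {1..<n}. \<sigma> (Suc i) < \<sigma> i} = descents (map \<sigma> [1..<Suc n])"
proof -
  have "{i \<in> {1..<n}. \<sigma> (Suc i) < \<sigma> i} = Suc ` descent_positions (map \<sigma> [1..<Suc n])"
  proof (intro set_eqI iffI)
    fix i assume "i \<in> {i \<in> {1..<n}. \<sigma> (Suc i) < \<sigma> i}"
    then show "i \<in> Suc ` descent_positions (map \<sigma> [1..<Suc n])"
      by (cases i) (auto simp: descent_positions_def simp del: upt_Suc)
  qed (auto simp: descent_positions_def simp del: upt_Suc)
  then show ?thesis by (simp add: descents_eq_card card_image)
qed

lemma card_filter_bij:
  assumes "bij_betw f A B"
  shows "card {x \<in> A. Q (f x)} = card {y \<in> B. Q y}"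
proof -
  have "f ` {x \<in> A. Q (f x)} = {y \<in> B. Q y}"
    using bij_betw_imp_surj_on[OF assms] by blast
  moreover have "inj_on f {x \<in> A. Q (f x)}"
    using bij_betw_imp_inj_on[OF assms] by (rule inj_on_subset) auto
  ultimately show ?thesis by (metis card_image)
qed

lemma eulerian_num_lists:
  "eulerian_num n J = card {xs \<in> permutations_of_set {1..n}. descents xs = J}"
proof -
  have "bij_betw (\<lambda>\<sigma>. map \<sigma> [1..<Suc n]) {\<sigma>. \<sigma> permutes {1..n}} (permutations_of_set {1..n})"
    using permutes_list_bij[of "[1..<Suc n]"]
    by (simp add: atLeastLessThanSuc_atLeastAtMost del: upt_Suc)
  from card_filter_bij[OF this, of "\<lambda>xs. descents xs = J"] show ?thesis
    unfolding eulerian_num_def descents_map_upt by (simp del: upt_Suc)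
qed

lemma sum_if_const:
  "finite A \<Longrightarrow> (\<Sum>x\<in>A. if P x then c else 0) = c * card {x \<in> A. P x}"
  by (simp add: sum.If_cases Int_def mult.commute)

text \<open>The classical recurrence \<open>A(n+1,J) = (J+1) A(n,J) + (n+1-J) A(n,J-1)\<close>, obtained
  by inserting \<open>n + 1\<close> into the arrangements of \<open>{1..n}\<close>.\<close>

lemma eulerian_num_rec:
  "eulerian_num (Suc n) J =
     (J + 1) * eulerian_num n J + (if J \<ge> 1 then (n - (J - 1)) * eulerian_num n (J - 1) else 0)"
proof -
  let ?P = "permutations_of_set {1..n}"
  let ?ins = "\<lambda>(ys, p). insert_at p (Suc n) ys"
  let ?Sigma = "SIGMA ys:?P. {p \<in> {..n}. descents (insert_at p (Suc n) ys) = J}"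
  have bij: "bij_betw ?ins (?P \<times> {..n}) (permutations_of_set {1..Suc n})"
    using permutations_of_insert_bij[of "{1..n}" "Suc n"] by (simp add: atLeastAtMostSuc_conv)
  have "{x \<in> ?P \<times> {..n}. descents (?ins x) = J} = ?Sigma"
    by auto
  then have "eulerian_num (Suc n) J = card ?Sigma"
    using card_filter_bij[OF bij, of "\<lambda>xs. descents xs = J"] by (simp add: eulerian_num_lists)
  also have "\<dots> = (\<Sum>ys\<in>?P. card {p \<in> {..n}. descents (insert_at p (Suc n) ys) = J})"
    by simp
  also have "\<dots> = (\<Sum>ys\<in>?P. (if descents ys = J then J + 1 else 0) +
                         (if Suc (descents ys) = J then n - (J - 1) else 0))"
  proof (rule sum.cong[OF refl])
    fix ys assume ys: "ys \<in> ?P"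
    then have "length ys = n" "\<forall>y\<in>set ys. y < Suc n"
      using length_finite_permutations_of_set by (force dest: permutations_of_setD)+
    then show "card {p \<in> {..n}. descents (insert_at p (Suc n) ys) = J} =
        (if descents ys = J then J + 1 else 0) + (if Suc (descents ys) = J then n - (J - 1) else 0)"
      using card_insertions_with_descents[of ys "Suc n" J] by auto
  qed
  also have "\<dots> = (J + 1) * eulerian_num n J +
                   (n - (J - 1)) * card {ys \<in> ?P. Suc (descents ys) = J}"
    by (simp add: sum.distrib sum_if_const eulerian_num_lists)
  also have "\<dots> = (J + 1) * eulerian_num n J +
                   (if J \<ge> 1 then (n - (J - 1)) * eulerian_num n (J - 1) else 0)"
    by (cases J) (simp_all add: eulerian_num_lists)
  finally show ?thesis .
qed

lemma eulerian_num_eq_0: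
  assumes "n \<ge> 1" "J \<ge> n"
  shows "eulerian_num n J = 0"
proof -
  have "descents xs \<noteq> J" if "xs \<in> permutations_of_set {1..n}" for xs
    using that descents_le[of xs] assms length_finite_permutations_of_set by fastforce
  then show ?thesis by (auto simp: eulerian_num_lists)
qed

lemma eulerian_num_1: "eulerian_num 1 J = (if J = 0 then 1 else 0)"
  by (simp add: eulerian_num_lists Collect_conv_if)

lemma coeff_eulerian_poly:
  assumes "n \<ge> 1"
  shows "coeff (eulerian_poly n) j = (if j = 0 then 0 else real (eulerian_num n (j - 1)))"
proof -
  have "coeff (eulerian_poly n) j = (\<Sum>J\<le>n. if Suc J = j then real (eulerian_num n J) else 0)"
    by (simp add: eulerian_poly_def coeff_sum)
  also have "\<dots> = (if j = 0 then 0 else real (eulerian_num n (j - 1)))"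
    using eulerian_num_eq_0[OF assms] by (cases j) (auto simp: not_le)
  finally show ?thesis .
qed

lemma coeff_eulerian_poly_1: "coeff (eulerian_poly 1) j = (if j = 1 then 1 else 0)"
  by (simp add: coeff_eulerian_poly eulerian_num_1[unfolded One_nat_def])

lemma coeff_eulerian_poly_Suc:
  assumes "n \<ge> 1"
  shows "coeff (eulerian_poly (Suc n)) j =
    (if j = 0 then 0
     else real j * coeff (eulerian_poly n) j + (real n + 2 - real j) * coeff (eulerian_poly n) (j - 1))"
proof (cases j)
  case (Suc J)
  have rec: "real (eulerian_num (Suc n) J) = real (J + 1) * real (eulerian_num n J) +
      real (if J \<ge> 1 then (n - (J - 1)) * eulerian_num n (J - 1) else 0)"
    by (simp only: eulerian_num_rec of_nat_add of_nat_mult)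
  text \<open>The second term vanishes for \<open>J > n\<close>, where \<open>n + 1 - J\<close> would be negative.\<close>
  have "real (if J \<ge> 1 then (n - (J - 1)) * eulerian_num n (J - 1) else 0) =
      (real n + 2 - real j) * (if J = 0 then 0 else real (eulerian_num n (J - 1)))"
    using Suc eulerian_num_eq_0[OF assms, of "J - 1"] by auto
  then show ?thesis
    using Suc rec
    by (simp add: coeff_eulerian_poly[OF assms] coeff_eulerian_poly[of "Suc n"] algebra_simps)
qed (simp add: coeff_eulerian_poly)

section \<open>The generating function of \<open>k\<^sup>n\<close>\<close>

lemma fps_one_minus_X_mult_nth:
  "((1 - fps_X) * (g :: 'a::comm_ring_1 fps)) $ k = g $ k - (if k = 0 then 0 else g $ (k - 1))"
proof -
  have "(1 - fps_X) * g = g - fps_X * g" by (simp add: algebra_simps)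
  then show ?thesis by simp
qed

definition powers_fps :: "nat \<Rightarrow> real fps" where
  "powers_fps n = Abs_fps (\<lambda>k. real k ^ n)"

definition eulerian_fps :: "nat \<Rightarrow> real fps" where
  "eulerian_fps n = powers_fps n * (1 - fps_X) ^ Suc n"

lemma powers_fps_Suc: "powers_fps (Suc n) = fps_X * fps_deriv (powers_fps n)"
  by (rule fps_ext) (auto simp: powers_fps_def)

lemma eulerian_fps_Suc:
  "eulerian_fps (Suc n) =
     fps_X * ((1 - fps_X) * fps_deriv (eulerian_fps n) + of_nat (Suc n) * eulerian_fps n)"
proof -
  have ring_identity:
    "x * (u * (d * u ^ Suc n + f * (of_nat (Suc n) * (- 1) * u ^ n)) + of_nat (Suc n) * (f * u ^ Suc n))
       = x * d * u ^ Suc (Suc n)" for x u d f :: "real fps"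
    by (simp add: algebra_simps)
  have "fps_deriv ((1 - fps_X :: real fps) ^ Suc n) = of_nat (Suc n) * (- 1) * (1 - fps_X) ^ n"
    unfolding fps_deriv_power' by simp
  then show ?thesis
    unfolding eulerian_fps_def powers_fps_Suc fps_deriv_mult
    using ring_identity[of fps_X "1 - fps_X" "fps_deriv (powers_fps n)" "powers_fps n"]
    by (simp add: add.commute)
qed

lemma eulerian_fps_Suc_nth:
  "eulerian_fps (Suc n) $ j =
    (if j = 0 then 0
     else real j * eulerian_fps n $ j + (real n + 2 - real j) * eulerian_fps n $ (j - 1))"
proof (cases j)
  case (Suc k)
  have "eulerian_fps (Suc n) $ j =
      ((1 - fps_X) * fps_deriv (eulerian_fps n) + of_nat (Suc n) * eulerian_fps n) $ k"
    using Suc by (simp add: eulerian_fps_Suc)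
  also have "\<dots> = real j * eulerian_fps n $ j - (if k = 0 then 0 else real k * eulerian_fps n $ k)
                   + real (Suc n) * eulerian_fps n $ k"
    using Suc by (simp add: fps_one_minus_X_mult_nth fps_of_nat[symmetric])
  finally show ?thesis
    using Suc by (cases k) (simp_all add: algebra_simps)
qed (simp add: eulerian_fps_Suc)

lemma eulerian_fps_0: "eulerian_fps 0 = 1"
proof (rule fps_ext)
  fix j
  have "eulerian_fps 0 = (1 - fps_X) * powers_fps 0"
    by (simp add: eulerian_fps_def mult.commute)
  then show "eulerian_fps 0 $ j = 1 $ j"
    by (simp add: fps_one_minus_X_mult_nth powers_fps_def)
qed

text \<open>Hence \<open>\<Sum>\<^sub>k k\<^sup>n x\<^sup>k = p\<^sub>n(x) / (1 - x)\<^sup>n\<^sup>+\<^sup>1\<close> for \<open>n \<ge> 1\<close>: both sides satisfy the same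
  recurrence and agree for \<open>n = 1\<close>.\<close>

theorem eulerian_fps_nth:
  assumes "n \<ge> 1"
  shows "eulerian_fps n $ j = coeff (eulerian_poly n) j"
  using assms
proof (induction n arbitrary: j rule: dec_induct)
  case base
  show ?case
    using eulerian_fps_Suc_nth[of 0 j] coeff_eulerian_poly_1[of j] by (simp add: eulerian_fps_0)
next
  case (step n)
  then show ?case
    by (simp add: eulerian_fps_Suc_nth coeff_eulerian_poly_Suc)
qed

section \<open>Asymptotics of the Veronese numerators\<close>

text \<open>The series \<open>\<Sum>\<^sub>k C(k+n,n) x\<^sup>k\<close>, the inverse of \<open>(1 - x)\<^sup>n\<^sup>+\<^sup>1\<close>.\<close>

definition binomial_fps :: "nat \<Rightarrow> 'a::comm_ring_1 fps" where
  "binomial_fps n = Abs_fps (\<lambda>k. of_nat ((k + n) choose n))"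

lemma one_minus_X_mult_binomial_fps_Suc:
  "(1 - fps_X) * binomial_fps (Suc n) = (binomial_fps n :: 'a::comm_ring_1 fps)"
proof (rule fps_ext)
  fix k
  show "((1 - fps_X) * binomial_fps (Suc n)) $ k = (binomial_fps n :: 'a fps) $ k"
  proof (cases k)
    case (Suc m)
    have "(Suc m + Suc n) choose Suc n = ((m + Suc n) choose Suc n) + ((m + Suc n) choose n)"
      by (simp add: add.commute)
    then show ?thesis using Suc by (simp add: fps_one_minus_X_mult_nth binomial_fps_def)
  qed (simp add: fps_one_minus_X_mult_nth binomial_fps_def binomial_eq_0)
qed

lemma one_minus_X_power_mult_binomial_fps:
  "(1 - fps_X) ^ Suc n * binomial_fps n = (1 :: 'a::comm_ring_1 fps)"
proof (induction n)
  case 0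
  show ?case
  proof (rule fps_ext)
    fix k show "((1 - fps_X) ^ Suc 0 * binomial_fps 0) $ k = (1 :: 'a fps) $ k"
      by (simp add: fps_one_minus_X_mult_nth binomial_fps_def)
  qed
next
  case (Suc n)
  have "(1 - fps_X) ^ Suc (Suc n) * binomial_fps (Suc n) =
      (1 - fps_X) ^ Suc n * ((1 - fps_X) * binomial_fps (Suc n) :: 'a fps)"
    by (simp add: mult_ac)
  then show ?case
    using Suc.IH by (simp only: one_minus_X_mult_binomial_fps_Suc)
qed

lemma hilb_series_nth:
  "hilb_series n h $ k = (\<Sum>i=0..k. coeff h i * real ((k - i + n) choose n))"
proof -
  have "((1 - fps_X) ^ Suc n :: real fps) $ 0 = 1" by (simp add: fps_power_zeroth)
  then have "hilb_series n h = fps_of_poly h * inverse ((1 - fps_X) ^ Suc n)"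
    unfolding hilb_series_def by (intro fps_divide_unit) simp
  also have "inverse ((1 - fps_X) ^ Suc n :: real fps) = binomial_fps n"
    by (rule fps_inverse_unique[OF one_minus_X_power_mult_binomial_fps])
  finally show ?thesis by (simp add: fps_mult_nth binomial_fps_def)
qed

lemma binomial_asymptotic:
  assumes "k \<ge> 1"
  shows "(\<lambda>b. real ((b * k - i + n) choose n) / real b ^ n) \<longlonglongrightarrow> real k ^ n / fact n"
proof -
  define q where "q b = (\<Prod>t\<in>{0..<n}. real k + (real n - real i - real t) / real b) / fact n" for b
  have "q \<longlonglongrightarrow> (\<Prod>t\<in>{0..<n}. real k + 0) / fact n"
    unfolding q_def
    by (intro tendsto_divide tendsto_const tendsto_prod tendsto_add lim_const_over_n) simp
  moreover have "\<forall>\<^sub>F b in sequentially. q b = real ((b * k - i + n) choose n) / real b ^ n"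
  proof (rule eventually_sequentiallyI[of "i + 1"])
    fix b assume b: "i + 1 \<le> b"
    have "b \<le> b * k" using assms by simp
    then have "i \<le> b * k" using b by linarith
    then have top: "real (b * k - i) = real b * real k - real i"
      by simp
    have b_pos: "real b > 0" using b by simp
    have "real ((b * k - i + n) choose n) = (\<Prod>t\<in>{0..<n}. real (b * k - i + n) - real t) / fact n"
      by (simp add: binomial_gbinomial gbinomial_prod_rev)
    also have "\<dots> = (\<Prod>t\<in>{0..<n}. real b * (real k + (real n - real i - real t) / real b)) / fact n"
      using b_pos by (intro arg_cong[where f = "\<lambda>x. x / fact n"] prod.cong refl)
        (simp add: top field_simps)
    also have "\<dots> = real b ^ n * q b"
      by (simp add: prod.distrib q_def)
    finally show "q b = real ((b * k - i + n) choose n) / real b ^ n"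
      using b_pos by simp
  qed
  ultimately show ?thesis
    using Lim_transform_eventually by fastforce
qed

lemma hilb_series_asymptotic:
  assumes "n \<ge> 1"
  shows "(\<lambda>b. hilb_series n h $ (b * k) / real b ^ n) \<longlonglongrightarrow> poly h 1 * real k ^ n / fact n"
proof (cases "k = 0")
  case True
  have "(\<lambda>b. coeff h 0 * (1 / real b) ^ n) \<longlonglongrightarrow> coeff h 0 * 0 ^ n"
    by (intro tendsto_intros)
  then show ?thesis
    using True assms by (simp add: hilb_series_nth power_one_over power_0_left)
next
  case False
  let ?terms = "\<lambda>b. \<Sum>i\<le>degree h. coeff h i * (real ((b * k - i + n) choose n) / real b ^ n)"
  have "?terms \<longlonglongrightarrow> (\<Sum>i\<le>degree h. coeff h i * (real k ^ n / fact n))"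
    using False by (intro tendsto_sum tendsto_mult tendsto_const binomial_asymptotic) simp
  moreover have "(\<Sum>i\<le>degree h. coeff h i * (real k ^ n / fact n)) = poly h 1 * real k ^ n / fact n"
    by (simp add: poly_altdef sum_distrib_right sum_divide_distrib)
  text \<open>Once \<open>b * k \<ge> degree h\<close>, the convolution for \<open>a\<^sub>b\<^sub>k\<close> runs over all coefficients of \<open>h\<close>.\<close>
  moreover have "\<forall>\<^sub>F b in sequentially. ?terms b = hilb_series n h $ (b * k) / real b ^ n"
  proof (rule eventually_sequentiallyI[of "degree h"])
    fix b assume "degree h \<le> b"
    moreover have "b \<le> b * k" using False by simp
    ultimately have "degree h \<le> b * k" by linarith
    then have "hilb_series n h $ (b * k) =
        (\<Sum>i\<le>degree h. coeff h i * real ((b * k - i + n) choose n))"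
      unfolding hilb_series_nth atLeast0AtMost
      by (intro sum.mono_neutral_right) (auto simp: coeff_eq_0)
    then show "?terms b = hilb_series n h $ (b * k) / real b ^ n"
      by (simp add: sum_divide_distrib)
  qed
  ultimately show ?thesis
    using Lim_transform_eventually by fastforce
qed

lemma veronese_num_nth:
  "veronese_num n h b $ j =
     (\<Sum>m=0..j. hilb_series n h $ (b * m) * ((1 - fps_X) ^ Suc n :: real fps) $ (j - m))"
  by (simp add: veronese_num_def fps_mult_nth)

lemma eulerian_fps_nth_conv:
  "eulerian_fps n $ j = (\<Sum>m=0..j. real m ^ n * ((1 - fps_X) ^ Suc n :: real fps) $ (j - m))"
  by (simp add: eulerian_fps_def powers_fps_def fps_mult_nth)

lemma veronese_num_asymptotic:
  assumes "n \<ge> 1"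
  shows "(\<lambda>b. veronese_num n h b $ j / real b ^ n) \<longlonglongrightarrow> poly h 1 * eulerian_fps n $ j / fact n"
proof -
  let ?c = "\<lambda>m. ((1 - fps_X) ^ Suc n :: real fps) $ (j - m)"
  have "(\<lambda>b. \<Sum>m=0..j. hilb_series n h $ (b * m) / real b ^ n * ?c m)
      \<longlonglongrightarrow> (\<Sum>m=0..j. poly h 1 * real m ^ n / fact n * ?c m)"
    by (intro tendsto_sum tendsto_mult tendsto_const hilb_series_asymptotic assms)
  moreover have "(\<Sum>m=0..j. poly h 1 * real m ^ n / fact n * ?c m) =
      poly h 1 * eulerian_fps n $ j / fact n"
    by (simp add: eulerian_fps_nth_conv sum_distrib_left sum_divide_distrib mult_ac)
  ultimately show ?thesis
    by (simp add: veronese_num_nth sum_divide_distrib)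
qed

theorem theorem5p1:
  fixes n :: nat and h :: "real poly"
  assumes "n \<ge> 1" and "degree h \<le> n + 1" and "poly h 1 \<noteq> 0"
  shows "\<forall>j. (\<lambda>b. fps_nth (veronese_num n h b) j / (real b ^ n * poly h 1))
            \<longlonglongrightarrow> coeff (eulerian_poly n) j / fact n"
proof
  fix j
  have "(\<lambda>b. veronese_num n h b $ j / real b ^ n / poly h 1)
      \<longlonglongrightarrow> poly h 1 * eulerian_fps n $ j / fact n / poly h 1"
    by (intro tendsto_divide tendsto_const veronese_num_asymptotic assms(1,3))
  then show "(\<lambda>b. veronese_num n h b $ j / (real b ^ n * poly h 1))
      \<longlonglongrightarrow> coeff (eulerian_poly n) j / fact n"
    using assms(3) by (simp add: eulerian_fps_nth[OF assms(1)])
qed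

end
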